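(* For every $1\le i\le k$ and every set $S\subseteq V_i$, the reduction procedure on $\mathbf{T}_i$ with input $S$ is well-defined: in Step 1 and in Step 2 no vertex of the current syndrome set is paired with more than one other vertex, and in Step 3 no vertex is shifted more than once. Moreover its output $\hat{\mathbf{e}}_i$ satisfies $S\,\triangle\,\sigma(\hat{\mathbf{e}}_i)\subseteq V_{i-1}$.
   Context: Fix $k\ge1$. Let $\mathbf{T}_k=(V_k,E_k)$ be the Cayley graph of $\mathbb{Z}/2^k\mathbb{Z}\times\mathbb{Z}/2^k\mathbb{Z}$ with generators $(\pm1,0),(0,\pm1)$. For $\hat{\mathbf{e}}\in\mathbb{F}_2^{E_k}$, $\sigma(\hat{\mathbf{e}})$ is the set of vertices incident to an odd number of edges of $\hat{\mathbf{e}}$. For $0\le i\le k$ let $h_i=2^{k-i}$, let $V_i$ be the subgroup generated by $(h_i,0),(0,h_i)$, and let $\mathbf{T}_i$ be the graph on $V_i$ joining vertices differing by $\pm h_i$ in exactly one coordinate; each edge of $\mathbf{T}_i$ is identified with the straight path of length $h_i$ in $\mathbf{T}_k$, and flipping an edge of $\mathbf{T}_i$ means adding (mod 2) all edges of that path to $\hat{\mathbf{e}}_i$. For $i\ge1$, a cell of $\mathbf{T}_i$ is a face: with $h=h_i$, vertices $\alpha=(x,y)$, $\beta=(x+h,y)$, $\gamma=(x,y-h)$, $\delta=(x+h,y-h)$ and edges $t=\alpha\beta$, $b=\gamma\delta$, $l=\alpha\gamma$, $r=\beta\delta$. A block of $\mathbf{T}_i$ is a square of side $2h$ with top-left corner in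 $V_{i-1}$ (a face of $\mathbf{T}_{i-1}$), made of four cells $A$ (top-left), $B$ (top-right), $C$ (bottom-left), $D$ (bottom-right). Reduction procedure on $\mathbf{T}_i$ (input $S\subseteq V_i$, output $\hat{\mathbf{e}}_i$ initially $0$; in each step the tests use $S$ as at the start of that step, all blocks simultaneously). Step 1: in the $D$ cell of every block, if $\alpha,\delta\in S$ flip $l,b$ (pairing $\alpha$ with $\delta$); if $\beta,\gamma\in S$ flip $b,r$ (pairing $\beta$ with $\gamma$); if all four are in $S$ only $l$ and $r$ are flipped; then remove paired vertices from $S$. Step 2: in the $C$ cell of every block, if $\alpha,\gamma\in S$ flip $l$, if $\beta,\delta\in S$ flip $r$; in the $B$ cell of every block, if $\alpha,\beta\in S$ flip $t$, if $\gamma,\delta\in S$ flip $b$ (each such instruction pairs the two vertices); then remove paired vertices from $S$. Step 3: in the $A$ cell of every block, if $\beta\in S$ flip $t$, if $\gamma\in S$ flip $l$, if $\delta\in S$ flip $l$ and $b$ (each shifting that vertex to $\alpha$). *)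

theory Defs
  imports Main
begin

(* Vertices of the torus T_k = Cayley graph of Z/2^k x Z/2^k are represented by
   normalised integer pairs (a,b) with 0 <= a,b < 2^k.  Edges are 2-element
   vertex sets; an edge set e-hat in F_2^{E_k} is a set of edges. *)

type_synonym vert = "int \<times> int"
type_synonym edge = "vert set"

definition Nk :: "nat \<Rightarrow> int" where
  "Nk k = 2 ^ k"

definition vn :: "nat \<Rightarrow> vert \<Rightarrow> vert" where
  "vn k p = (fst p mod Nk k, snd p mod Nk k)"

definition vplus :: "vert \<Rightarrow> int \<Rightarrow> int \<Rightarrow> vert" where
  "vplus p x y = (fst p + x, snd p + y)"

definition torus_vertices :: "nat \<Rightarrow> vert set" where
  "torus_vertices k = {p. 0 \<le> fst p \<and> fst p < Nk k \<and> 0 \<le> snd p \<and> snd p < Nk k}"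

definition torus_edges :: "nat \<Rightarrow> edge set" where
  "torus_edges k =
     {{u, vn k (vplus u 1 0)} | u. u \<in> torus_vertices k} \<union>
     {{u, vn k (vplus u 0 1)} | u. u \<in> torus_vertices k}"

definition sigma :: "nat \<Rightarrow> edge set \<Rightarrow> vert set" where
  "sigma k e = {v \<in> torus_vertices k. odd (card {x \<in> e. v \<in> x})}"

definition hgt :: "nat \<Rightarrow> nat \<Rightarrow> int" where
  "hgt k i = 2 ^ (k - i)"

definition sublattice :: "nat \<Rightarrow> nat \<Rightarrow> vert set" where
  "sublattice k i = {p \<in> torus_vertices k. hgt k i dvd fst p \<and> hgt k i dvd snd p}"

definition hpath :: "nat \<Rightarrow> vert \<Rightarrow> int \<Rightarrow> edge set" where
  "hpath k p h = {{vn k (vplus p j 0), vn k (vplus p (j + 1) 0)} | j. 0 \<le> j \<and> j < h}"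

definition vpath :: "nat \<Rightarrow> vert \<Rightarrow> int \<Rightarrow> edge set" where
  "vpath k p h = {{vn k (vplus p 0 j), vn k (vplus p 0 (j + 1))} | j. 0 \<le> j \<and> j < h}"

datatype corner = Alpha | Beta | Gamma | Delta
datatype side = Top | Bot | Lft | Rgt
datatype cellpos = CellA | CellB | CellC | CellD

(* cell with top-left vertex a (alpha) and side h:
   alpha=(x,y), beta=(x+h,y), gamma=(x,y-h), delta=(x+h,y-h) *)
fun cell_vertex :: "nat \<Rightarrow> int \<Rightarrow> vert \<Rightarrow> corner \<Rightarrow> vert" where
  "cell_vertex k h a Alpha = vn k a"
| "cell_vertex k h a Beta = vn k (vplus a h 0)"
| "cell_vertex k h a Gamma = vn k (vplus a 0 (- h))"
| "cell_vertex k h a Delta = vn k (vplus a h (- h))"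

fun cell_side :: "nat \<Rightarrow> int \<Rightarrow> vert \<Rightarrow> side \<Rightarrow> edge set" where
  "cell_side k h a Top = hpath k a h"
| "cell_side k h a Bot = hpath k (vplus a 0 (- h)) h"
| "cell_side k h a Lft = vpath k (vplus a 0 (- h)) h"
| "cell_side k h a Rgt = vpath k (vplus a h (- h)) h"

(* alpha vertex of the cells A (top-left), B (top-right), C (bottom-left),
   D (bottom-right) of the block with top-left corner c (side 2h) *)
fun cell_alpha :: "int \<Rightarrow> vert \<Rightarrow> cellpos \<Rightarrow> vert" where
  "cell_alpha h c CellA = c"
| "cell_alpha h c CellB = vplus c h 0"
| "cell_alpha h c CellC = vplus c 0 (- h)"
| "cell_alpha h c CellD = vplus c h (- h)"

datatype instr =
    D_AD | D_BG | D_AG | D_BD    (* step 1; D_AG, D_BD together = the all-four case *)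
  | C_AG | C_BD | B_AB | B_GD
  | A_B | A_G | A_D              (* step 3: shift beta / gamma / delta to alpha *)

fun instr_step :: "instr \<Rightarrow> nat" where
  "instr_step D_AD = 1" | "instr_step D_BG = 1" | "instr_step D_AG = 1" | "instr_step D_BD = 1"
| "instr_step C_AG = 2" | "instr_step C_BD = 2" | "instr_step B_AB = 2" | "instr_step B_GD = 2"
| "instr_step A_B = 3" | "instr_step A_G = 3" | "instr_step A_D = 3"

fun instr_cell :: "instr \<Rightarrow> cellpos" where
  "instr_cell D_AD = CellD" | "instr_cell D_BG = CellD" | "instr_cell D_AG = CellD"
| "instr_cell D_BD = CellD"
| "instr_cell C_AG = CellC" | "instr_cell C_BD = CellC"
| "instr_cell B_AB = CellB" | "instr_cell B_GD = CellB"
| "instr_cell A_B = CellA" | "instr_cell A_G = CellA" | "instr_cell A_D = CellA"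

fun instr_corners :: "instr \<Rightarrow> corner set" where
  "instr_corners D_AD = {Alpha, Delta}"
| "instr_corners D_BG = {Beta, Gamma}"
| "instr_corners D_AG = {Alpha, Gamma}"
| "instr_corners D_BD = {Beta, Delta}"
| "instr_corners C_AG = {Alpha, Gamma}"
| "instr_corners C_BD = {Beta, Delta}"
| "instr_corners B_AB = {Alpha, Beta}"
| "instr_corners B_GD = {Gamma, Delta}"
| "instr_corners A_B = {Beta}"
| "instr_corners A_G = {Gamma}"
| "instr_corners A_D = {Delta}"

fun instr_sides :: "instr \<Rightarrow> side list" where
  "instr_sides D_AD = [Lft, Bot]"
| "instr_sides D_BG = [Bot, Rgt]"
| "instr_sides D_AG = [Lft]"
| "instr_sides D_BD = [Rgt]"
| "instr_sides C_AG = [Lft]"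
| "instr_sides C_BD = [Rgt]"
| "instr_sides B_AB = [Top]"
| "instr_sides B_GD = [Bot]"
| "instr_sides A_B = [Top]"
| "instr_sides A_G = [Lft]"
| "instr_sides A_D = [Lft, Bot]"

definition blocks :: "nat \<Rightarrow> nat \<Rightarrow> vert set" where
  "blocks k i = sublattice k (i - 1)"

definition instr_verts :: "nat \<Rightarrow> nat \<Rightarrow> vert \<Rightarrow> instr \<Rightarrow> vert set" where
  "instr_verts k i c l =
     cell_vertex k (hgt k i) (cell_alpha (hgt k i) c (instr_cell l)) ` instr_corners l"

definition instr_flips :: "nat \<Rightarrow> nat \<Rightarrow> vert \<Rightarrow> instr \<Rightarrow> edge set list" where
  "instr_flips k i c l =
     map (cell_side k (hgt k i) (cell_alpha (hgt k i) c (instr_cell l))) (instr_sides l)"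

definition Dcell_verts :: "nat \<Rightarrow> nat \<Rightarrow> vert \<Rightarrow> vert set" where
  "Dcell_verts k i c = cell_vertex k (hgt k i) (cell_alpha (hgt k i) c CellD) ` UNIV"

(* Step 1 (tests use S at the start of Step 1) *)
definition active1 :: "nat \<Rightarrow> nat \<Rightarrow> vert set \<Rightarrow> vert \<Rightarrow> instr \<Rightarrow> bool" where
  "active1 k i S c l =
     (instr_step l = 1 \<and>
      (if l = D_AG \<or> l = D_BD then Dcell_verts k i c \<subseteq> S
       else instr_verts k i c l \<subseteq> S \<and> \<not> Dcell_verts k i c \<subseteq> S))"

definition after1 :: "nat \<Rightarrow> nat \<Rightarrow> vert set \<Rightarrow> vert set" where
  "after1 k i S = S - \<Union> {instr_verts k i c l | c l. c \<in> blocks k i \<and> active1 k i S c l}"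

(* Step 2 (tests use the set at the start of Step 2) *)
definition active2 :: "nat \<Rightarrow> nat \<Rightarrow> vert set \<Rightarrow> vert \<Rightarrow> instr \<Rightarrow> bool" where
  "active2 k i S c l = (instr_step l = 2 \<and> instr_verts k i c l \<subseteq> after1 k i S)"

definition after2 :: "nat \<Rightarrow> nat \<Rightarrow> vert set \<Rightarrow> vert set" where
  "after2 k i S = after1 k i S -
     \<Union> {instr_verts k i c l | c l. c \<in> blocks k i \<and> active2 k i S c l}"

definition active3 :: "nat \<Rightarrow> nat \<Rightarrow> vert set \<Rightarrow> vert \<Rightarrow> instr \<Rightarrow> bool" where
  "active3 k i S c l = (instr_step l = 3 \<and> instr_verts k i c l \<subseteq> after2 k i S)"

definition active :: "nat \<Rightarrow> nat \<Rightarrow> vert set \<Rightarrow> vert \<Rightarrow> instr \<Rightarrow> bool" where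
  "active k i S c l = (active1 k i S c l \<or> active2 k i S c l \<or> active3 k i S c l)"

definition reduction_output :: "nat \<Rightarrow> nat \<Rightarrow> vert set \<Rightarrow> edge set" where
  "reduction_output k i S =
     {e. odd (card {(c, l, j). c \<in> blocks k i \<and> active k i S c l \<and>
                               j < length (instr_flips k i c l) \<and> e \<in> instr_flips k i c l ! j})}"

end

theory Submission
  imports Defs
begin

(* Write every vertex of V_i as grid_point c a b with c a block corner (a vertex of V_(i-1)) and
   a, b in {0, 1}; the D cells of the blocks partition V_i.  Step 1 acts inside single D cells and
   leaves at most two vertices of each.  Every step-2 instruction pairs the two ends of a side of
   a D cell, so two step-2 instructions through one vertex would leave three vertices of one D cell
   after step 1; the step-3 instructions start at distinct vertices.  As paired vertices leave the
   syndrome set, every vertex of S outside V_(i-1) is paired or shifted by exactly one executed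
   instruction, and no other vertex is.
   On the other side, sigma is additive over F_2 and the boundary of a straight path consists of
   its two ends, so the sides flipped by an instruction have as boundary exactly the vertices it
   pairs or shifts, together with the target of a shift, which lies in V_(i-1).  Hence
   sigma(e_i) agrees with S outside V_(i-1). *)

section \<open>Parity of boundaries\<close>

lemma odd_card_incident_mod2_sum:
  fixes F :: "'t \<Rightarrow> 'e set set"
  assumes T: "finite T" and F: "\<And>t. t \<in> T \<Longrightarrow> finite (F t)"
  shows "odd (card {x \<in> {e. odd (card {t \<in> T. e \<in> F t})}. v \<in> x})
         \<longleftrightarrow> odd (\<Sum>t\<in>T. card {x \<in> F t. v \<in> x})"
proof -
  define U where "U = {x \<in> \<Union>(F ` T). v \<in> x}"
  have U: "finite U" using T F unfolding U_def by auto
  have incident_odd: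
    "{x \<in> {e. odd (card {t \<in> T. e \<in> F t})}. v \<in> x} = {x \<in> U. odd (card {t \<in> T. x \<in> F t})}"
    unfolding U_def by (auto dest: odd_card_imp_not_empty)
  have "card {x \<in> F t. v \<in> x} = (\<Sum>x\<in>U. of_bool (x \<in> F t))" if "t \<in> T" for t
  proof -
    have "{x \<in> F t. v \<in> x} = U \<inter> {x. x \<in> F t}" using that by (auto simp: U_def)
    then show ?thesis using U by simp
  qed
  then have "(\<Sum>t\<in>T. card {x \<in> F t. v \<in> x}) = (\<Sum>t\<in>T. \<Sum>x\<in>U. of_bool (x \<in> F t))"
    by simp
  also have "\<dots> = (\<Sum>x\<in>U. \<Sum>t\<in>T. of_bool (x \<in> F t))"
    by (rule sum.swap)
  also have "\<dots> = (\<Sum>x\<in>U. card {t \<in> T. x \<in> F t})"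
    using T by (simp add: Int_def conj_commute)
  finally show ?thesis
    using even_sum_iff[OF U, of "\<lambda>x. card {t \<in> T. x \<in> F t}"] incident_odd by simp
qed

lemma odd_card_incident_path:
  fixes g :: "int \<Rightarrow> 'a" and N :: int
  assumes g: "\<And>j j'. g j = g j' \<longleftrightarrow> N dvd (j - j')" and n: "0 \<le> n" "2 * n \<le> N"
  shows "odd (card {x \<in> {{g j, g (j + 1)} | j. 0 \<le> j \<and> j < n}. v \<in> x}) \<longleftrightarrow> (v = g 0) \<noteq> (v = g n)"
  using n
proof (induction n rule: int_ge_induct)
  case base
  have no_edges: "{{g j, g (j + 1)} | j. 0 \<le> j \<and> j < (0::int)} = {}" by auto
  show ?case unfolding no_edges by simp
next
  case (step m)
  let ?H = "{{g j, g (j + 1)} | j. 0 \<le> j \<and> j < m}"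
  let ?e = "{g m, g (m + 1)}"
  have N: "2 * (m + 1) \<le> N" using step by simp
  have H_finite: "finite ?H"
    by (rule finite_image_set) simp
  have H_insert: "{{g j, g (j + 1)} | j. 0 \<le> j \<and> j < m + 1} = insert ?e ?H"
    using step(1) by (auto simp: le_less)
  have e_new: "?e \<notin> ?H"
  proof
    assume "?e \<in> ?H"
    then obtain j where j: "0 \<le> j" "j < m" "?e = {g j, g (j + 1)}" by auto
    have "\<not> N dvd d" if "0 < d" "d < N" for d
      using that zdvd_not_zless by blast
    then have "g m \<noteq> g j" "g m \<noteq> g (j + 1) \<or> g (m + 1) \<noteq> g j"
      using g j N by auto
    then show False using j(3) by (auto simp: doubleton_eq_iff)
  qed
  have e_proper: "g m \<noteq> g (m + 1)"
    using g[of m "m + 1"] N step(1) by (simp add: zdvd_not_zless)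
  have "{x \<in> insert ?e ?H. v \<in> x} = (if v \<in> ?e then insert ?e {x \<in> ?H. v \<in> x} else {x \<in> ?H. v \<in> x})"
    by auto
  then have "card {x \<in> insert ?e ?H. v \<in> x} = card {x \<in> ?H. v \<in> x} + (if v \<in> ?e then 1 else 0)"
    using H_finite e_new by simp
  then show ?case
    using step.IH N e_proper unfolding H_insert by (cases "v = g m"; cases "v = g (m + 1)") auto
qed

section \<open>Combinatorics of cells and instructions\<close>

fun corner_offset :: "corner \<Rightarrow> int \<times> int" where
  "corner_offset Alpha = (0, 0)"
| "corner_offset Beta = (1, 0)"
| "corner_offset Gamma = (0, 1)"
| "corner_offset Delta = (1, 1)"

fun cellpos_offset :: "cellpos \<Rightarrow> int \<times> int" where
  "cellpos_offset CellA = (0, 0)"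
| "cellpos_offset CellB = (1, 0)"
| "cellpos_offset CellC = (0, 1)"
| "cellpos_offset CellD = (1, 1)"

fun side_corners :: "side \<Rightarrow> corner set" where
  "side_corners Top = {Alpha, Beta}"
| "side_corners Bot = {Gamma, Delta}"
| "side_corners Lft = {Alpha, Gamma}"
| "side_corners Rgt = {Beta, Delta}"

fun step2_corners :: "instr \<Rightarrow> corner set" where
  "step2_corners C_AG = {Beta, Delta}"
| "step2_corners C_BD = {Alpha, Gamma}"
| "step2_corners B_AB = {Gamma, Delta}"
| "step2_corners B_GD = {Alpha, Beta}"
| "step2_corners _ = {}"

fun shift_source :: "instr \<Rightarrow> int \<times> int" where
  "shift_source A_B = (1, 0)"
| "shift_source A_G = (0, 1)"
| "shift_source A_D = (1, 1)"
| "shift_source _ = (0, 0)"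

lemma finite_UNIV_instr: "finite (UNIV :: instr set)"
proof -
  have univ: "(UNIV :: instr set) = {D_AD, D_BG, D_AG, D_BD, C_AG, C_BD, B_AB, B_GD, A_B, A_G, A_D}"
  proof (rule UNIV_eq_I)
    fix l :: instr
    show "l \<in> {D_AD, D_BG, D_AG, D_BD, C_AG, C_BD, B_AB, B_GD, A_B, A_G, A_D}"
      by (cases l) simp_all
  qed
  show ?thesis unfolding univ by simp
qed

lemma finite_cell_side: "finite (cell_side k h a s)"
  by (cases s) (simp_all add: hpath_def vpath_def finite_image_set)

lemma three_corners_cases:
  assumes "distinct [x, y, z]"
  shows "{Alpha, Delta} \<subseteq> {x, y, z} \<or> {Beta, Gamma} \<subseteq> {x, y, z}"
    and "{Alpha, Gamma} \<inter> {x, y, z} \<noteq> {}"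
  using assms by (cases x; cases y; cases z; simp)+

lemma step1_corners_overlap:
  assumes "instr_step l = 1" "instr_step l' = 1" "l \<in> {D_AG, D_BD} \<longleftrightarrow> l' \<in> {D_AG, D_BD}"
    and "x \<in> instr_corners l" "x \<in> instr_corners l'"
  shows "l = l'"
  using assms by (cases l; cases l'; simp; cases x; simp)

lemma step2_corners_doubleton:
  "instr_step l = 2 \<Longrightarrow> x \<in> step2_corners l \<Longrightarrow> \<exists>y. y \<noteq> x \<and> step2_corners l = {x, y}"
  by (cases l; simp; cases x; auto)

lemma step2_corners_inj:
  "instr_step l = 2 \<Longrightarrow> instr_step l' = 2 \<Longrightarrow> step2_corners l = step2_corners l' \<Longrightarrow> l = l'"
  by (cases l; cases l'; simp add: doubleton_eq_iff)

section \<open>Block coordinates\<close>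

locale reduction_level =
  fixes k i :: nat
  assumes one_le_i: "1 \<le> i" and i_le_k: "i \<le> k"
begin

abbreviation h :: int where "h \<equiv> hgt k i"

abbreviation N :: int where "N \<equiv> Nk k"

lemma N_eq: "N = 2 * h * 2 ^ (i - 1)"
proof -
  have "k = (k - i) + 1 + (i - 1)" using one_le_i i_le_k by simp
  then have "(2::int) ^ k = 2 ^ (k - i) * 2 * 2 ^ (i - 1)" by (metis power_add power_one_right)
  then show ?thesis by (simp add: Nk_def hgt_def)
qed

lemma h_pos: "0 < h"
  by (simp add: hgt_def)

lemma two_h_dvd_N: "2 * h dvd N"
  using N_eq by simp

lemma two_h_le_N: "2 * h \<le> N"
  using two_h_dvd_N h_pos by (simp add: Nk_def zdvd_imp_le)

lemma hgt_pred: "hgt k (i - 1) = 2 * h"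
proof -
  have "k - (i - 1) = Suc (k - i)" using one_le_i i_le_k by simp
  then show ?thesis by (simp add: hgt_def)
qed

lemma mem_blocks_iff: "c \<in> blocks k i \<longleftrightarrow>
  0 \<le> fst c \<and> fst c < N \<and> 0 \<le> snd c \<and> snd c < N \<and> 2 * h dvd fst c \<and> 2 * h dvd snd c"
  using hgt_pred by (auto simp: blocks_def sublattice_def torus_vertices_def)

lemma finite_blocks: "finite (blocks k i)"
proof (rule finite_subset)
  show "blocks k i \<subseteq> {0..<N} \<times> {0..<N}" by (auto simp: mem_blocks_iff)
qed simp

lemma vn_block: "c \<in> blocks k i \<Longrightarrow> vn k c = c"
  by (cases c) (simp add: mem_blocks_iff vn_def)

text \<open>\<open>grid_point c a b\<close> lies \<open>a\<close> steps of length \<open>h\<close> to the right of \<open>c\<close> and \<open>b\<close> steps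
  downwards, downwards being the direction from \<open>\<alpha>\<close> to \<open>\<gamma>\<close> in a cell.\<close>

definition grid_point :: "vert \<Rightarrow> int \<Rightarrow> int \<Rightarrow> vert" where
  "grid_point c a b = vn k (fst c + a * h, snd c - b * h)"

lemma grid_point_eq_iff: "grid_point c a b = grid_point c' a' b' \<longleftrightarrow>
  N dvd fst c + a * h - (fst c' + a' * h) \<and> N dvd snd c - b * h - (snd c' - b' * h)"
  by (simp add: grid_point_def vn_def mod_eq_dvd_iff)

lemma grid_point_0_0: "c \<in> blocks k i \<Longrightarrow> grid_point c 0 0 = c"
  using vn_block by (simp add: grid_point_def)

lemma grid_point_grid_point [simp]:
  "grid_point (grid_point c a b) a' b' = grid_point c (a + a') (b + b')"
  by (simp add: grid_point_def vn_def mod_simps algebra_simps)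

lemma grid_point_in_blocks:
  assumes c: "c \<in> blocks k i" and "even a" "even b"
  shows "grid_point c a b \<in> blocks k i"
proof -
  obtain a' b' where "a = 2 * a'" "b = 2 * b'" using assms(2,3) by (auto elim!: evenE)
  then have "2 * h dvd fst c + a * h" "2 * h dvd snd c - b * h"
    using c by (auto simp: mem_blocks_iff)
  then have "2 * h dvd (fst c + a * h) mod N" "2 * h dvd (snd c - b * h) mod N"
    using two_h_dvd_N by (auto simp: dvd_mod)
  then show ?thesis by (simp add: mem_blocks_iff grid_point_def vn_def Nk_def)
qed

lemma grid_point_eq_blocksD:
  assumes c: "c \<in> blocks k i" and c': "c' \<in> blocks k i"
    and eq: "grid_point c a b = grid_point c' a' b'"
  shows "even (a - a') \<and> even (b - b') \<and> c' = grid_point c (a - a') (b - b')"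
proof -
  have N1: "N dvd fst c + a * h - (fst c' + a' * h)"
    and N2: "N dvd snd c - b * h - (snd c' - b' * h)"
    using eq grid_point_eq_iff by auto
  have "2 * h dvd fst c - fst c'" "2 * h dvd snd c - snd c'"
    using c c' by (auto simp: mem_blocks_iff)
  moreover have "2 * h dvd fst c + a * h - (fst c' + a' * h)"
    "2 * h dvd snd c - b * h - (snd c' - b' * h)"
    using N1 N2 two_h_dvd_N dvd_trans by blast+
  moreover have "(a - a') * h = (fst c + a * h - (fst c' + a' * h)) - (fst c - fst c')"
    "(b' - b) * h = (snd c - b * h - (snd c' - b' * h)) - (snd c - snd c')"
    by (simp_all add: algebra_simps)
  ultimately have "2 * h dvd (a - a') * h" "2 * h dvd (b' - b) * h"
    by (metis dvd_diff)+
  then have "even (a - a')" "even (b' - b)"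
    using h_pos by (simp_all add: mult.commute)
  moreover have "grid_point c (a - a') (b - b') = grid_point c' 0 0"
    using N1 N2 by (simp add: grid_point_eq_iff algebra_simps)
  ultimately show ?thesis
    using grid_point_0_0[OF c'] by (simp add: dvd_diff_commute)
qed

lemma grid_point_inj:
  assumes "c \<in> blocks k i" "c' \<in> blocks k i" "grid_point c a b = grid_point c' a' b'"
    and "\<bar>a - a'\<bar> < 2" "\<bar>b - b'\<bar> < 2"
  shows "c = c' \<and> a = a' \<and> b = b'"
proof -
  obtain p q where "a - a' = 2 * p" "b - b' = 2 * q"
    using grid_point_eq_blocksD[OF assms(1-3)] by (meson evenE)
  then have "a - a' = 0" "b - b' = 0" using assms(4,5) by auto
  then show ?thesis using grid_point_eq_blocksD[OF assms(1-3)] grid_point_0_0[OF assms(1)] by simp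
qed

lemma cell_vertex_eq_grid_point:
  "cell_vertex k h a x = grid_point a (fst (corner_offset x)) (snd (corner_offset x))"
  by (cases x) (simp_all add: grid_point_def vplus_def)

lemma grid_point_cell_alpha:
  "grid_point (cell_alpha h c p) a b =
    grid_point c (fst (cellpos_offset p) + a) (snd (cellpos_offset p) + b)"
  by (cases p) (simp_all add: grid_point_def vplus_def algebra_simps)

lemma cell_vertex_inj: "cell_vertex k h a x = cell_vertex k h a y \<longleftrightarrow> x = y"
proof -
  have "\<not> N dvd h" "\<not> N dvd - h"
    using h_pos two_h_le_N zdvd_not_zless by auto
  then show ?thesis
    by (cases x; cases y) (simp_all add: cell_vertex_eq_grid_point grid_point_eq_iff algebra_simps
        del: cell_vertex.simps)
qed

abbreviation dcell_vertex :: "vert \<Rightarrow> corner \<Rightarrow> vert" where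
  "dcell_vertex d \<equiv> cell_vertex k h (cell_alpha h d CellD)"

lemma dcell_vertex_eq_grid_point:
  "dcell_vertex d x = grid_point d (1 + fst (corner_offset x)) (1 + snd (corner_offset x))"
  by (simp only: cell_vertex_eq_grid_point grid_point_cell_alpha) simp

lemma dcell_vertex_eq_blocksD:
  assumes "d \<in> blocks k i" "d' \<in> blocks k i" "dcell_vertex d x = dcell_vertex d' y"
  shows "d = d' \<and> x = y"
proof -
  have eq: "grid_point d (1 + fst (corner_offset x)) (1 + snd (corner_offset x)) =
      grid_point d' (1 + fst (corner_offset y)) (1 + snd (corner_offset y))"
    using assms(3) by (simp only: dcell_vertex_eq_grid_point)
  have "\<bar>1 + fst (corner_offset x) - (1 + fst (corner_offset y))\<bar> < 2"
    "\<bar>1 + snd (corner_offset x) - (1 + snd (corner_offset y))\<bar> < 2"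
    by (cases x; cases y; simp)+
  then have "d = d' \<and> corner_offset x = corner_offset y"
    using grid_point_inj[OF assms(1,2) eq] by (simp add: prod_eq_iff)
  then show ?thesis by (cases x; cases y) auto
qed

lemma instr_verts_step1: "instr_step l = 1 \<Longrightarrow> instr_verts k i c l = dcell_vertex c ` instr_corners l"
  by (cases l) (simp_all add: instr_verts_def)

text \<open>Each step-2 instruction pairs the two ends of a side of a \<open>D\<close> cell: of its own block for
  \<open>C_BD\<close> and \<open>B_GD\<close>, of the block to the left for \<open>C_AG\<close>, of the block above for \<open>B_AB\<close>.\<close>

definition step2_dcell :: "vert \<Rightarrow> instr \<Rightarrow> vert" where
  "step2_dcell c l =
    (if l = C_AG then grid_point c (-2) 0 else if l = B_AB then grid_point c 0 (-2) else c)"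

lemma step2_dcell_in_blocks: "c \<in> blocks k i \<Longrightarrow> step2_dcell c l \<in> blocks k i"
  by (simp add: step2_dcell_def grid_point_in_blocks)

lemma instr_verts_step2:
  "instr_step l = 2 \<Longrightarrow> instr_verts k i c l = dcell_vertex (step2_dcell c l) ` step2_corners l"
  by (cases l) (simp_all add: instr_verts_def step2_dcell_def dcell_vertex_eq_grid_point
      cell_vertex_eq_grid_point grid_point_cell_alpha del: cell_vertex.simps cell_alpha.simps)

lemma instr_verts_step3:
  "instr_step l = 3 \<Longrightarrow>
    instr_verts k i c l = {grid_point c (fst (shift_source l)) (snd (shift_source l))}"
  by (cases l) (simp_all add: instr_verts_def cell_vertex_eq_grid_point del: cell_vertex.simps)

section \<open>Well-definedness\<close>

lemma after1_subset: "after1 k i S \<subseteq> S"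
  by (auto simp: after1_def)

lemma after2_subset: "after2 k i S \<subseteq> after1 k i S"
  by (auto simp: after2_def)

lemma not_in_after1_if_active1:
  "c \<in> blocks k i \<Longrightarrow> active1 k i S c l \<Longrightarrow> v \<in> instr_verts k i c l \<Longrightarrow> v \<notin> after1 k i S"
  unfolding after1_def by blast

lemma not_in_after2_if_active2:
  "c \<in> blocks k i \<Longrightarrow> active2 k i S c l \<Longrightarrow> v \<in> instr_verts k i c l \<Longrightarrow> v \<notin> after2 k i S"
  unfolding after2_def by blast

lemma dcell_three_corners_not_after1:
  assumes d: "d \<in> blocks k i" and xyz: "distinct [x, y, z]"
  shows "\<not> dcell_vertex d ` {x, y, z} \<subseteq> after1 k i S"
proof
  assume survive: "dcell_vertex d ` {x, y, z} \<subseteq> after1 k i S"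
  then have in_S: "dcell_vertex d ` {x, y, z} \<subseteq> S"
    using after1_subset by blast
  obtain l where "active1 k i S d l" "instr_corners l \<inter> {x, y, z} \<noteq> {}"
  proof (cases "Dcell_verts k i d \<subseteq> S")
    case True
    then have "active1 k i S d D_AG" by (simp add: active1_def)
    then show thesis using that three_corners_cases(2)[OF xyz] by simp
  next
    case False
    from three_corners_cases(1)[OF xyz] show thesis
    proof
      assume pair: "{Alpha, Delta} \<subseteq> {x, y, z}"
      then have "active1 k i S d D_AD"
        using False in_S by (auto simp: active1_def instr_verts_step1)
      then show thesis using that pair by auto
    next
      assume pair: "{Beta, Gamma} \<subseteq> {x, y, z}"
      then have "active1 k i S d D_BG"
        using False in_S by (auto simp: active1_def instr_verts_step1)
      then show thesis using that pair by auto
    qed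
  qed
  moreover have "instr_step l = 1"
    using \<open>active1 k i S d l\<close> by (simp add: active1_def)
  ultimately obtain u where "u \<in> {x, y, z}" "dcell_vertex d u \<in> instr_verts k i d l"
    by (auto simp: instr_verts_step1)
  then show False
    using survive not_in_after1_if_active1[OF d \<open>active1 k i S d l\<close>] by blast
qed

lemma active1_unique:
  assumes c: "c \<in> blocks k i" and c': "c' \<in> blocks k i"
    and act: "active1 k i S c l" "active1 k i S c' l'"
    and v: "v \<in> instr_verts k i c l" "v \<in> instr_verts k i c' l'"
  shows "c = c' \<and> l = l'"
proof -
  have step: "instr_step l = 1" "instr_step l' = 1"
    using act by (simp_all add: active1_def)
  then obtain x x' where x: "x \<in> instr_corners l" "x' \<in> instr_corners l'"
    and "v = dcell_vertex c x" "v = dcell_vertex c' x'"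
    using v by (auto simp: instr_verts_step1)
  then have "c = c'" "x = x'"
    using dcell_vertex_eq_blocksD[OF c c'] by metis+
  moreover have "l \<in> {D_AG, D_BD} \<longleftrightarrow> Dcell_verts k i c \<subseteq> S"
    using act(1) unfolding active1_def by (cases l) auto
  moreover have "l' \<in> {D_AG, D_BD} \<longleftrightarrow> Dcell_verts k i c' \<subseteq> S"
    using act(2) unfolding active1_def by (cases l') auto
  ultimately show ?thesis
    using step1_corners_overlap[OF step] x by simp
qed

lemma active2_unique:
  assumes c: "c \<in> blocks k i" and c': "c' \<in> blocks k i"
    and act: "active2 k i S c l" "active2 k i S c' l'"
    and v: "v \<in> instr_verts k i c l" "v \<in> instr_verts k i c' l'"
  shows "c = c' \<and> l = l'"
proof -
  have step: "instr_step l = 2" "instr_step l' = 2"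
    using act by (simp_all add: active2_def)
  define d where "d = step2_dcell c l"
  have d: "d \<in> blocks k i" "step2_dcell c' l' \<in> blocks k i"
    using c c' by (simp_all add: d_def step2_dcell_in_blocks)
  obtain x x' where x: "x \<in> step2_corners l" "x' \<in> step2_corners l'"
    and "v = dcell_vertex d x" "v = dcell_vertex (step2_dcell c' l') x'"
    using v step by (auto simp: instr_verts_step2 d_def)
  then have same_dcell: "step2_dcell c' l' = d" and "x' = x"
    using dcell_vertex_eq_blocksD[OF d] by metis+
  obtain y z where y: "y \<noteq> x" "step2_corners l = {x, y}" and z: "z \<noteq> x" "step2_corners l' = {x, z}"
    using step2_corners_doubleton step x \<open>x' = x\<close> by metis
  have "dcell_vertex d ` {x, y, z} \<subseteq> after1 k i S"
    using act step same_dcell y z by (auto simp: active2_def instr_verts_step2 d_def)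
  then have "y = z"
    using dcell_three_corners_not_after1[OF d(1)] y z by auto
  then have "l = l'"
    using step2_corners_inj[OF step] y z by simp
  moreover have "c = c'"
    using same_dcell \<open>l = l'\<close>
    by (auto simp: d_def step2_dcell_def split: if_splits dest: grid_point_inj[OF c' c])
  ultimately show ?thesis by simp
qed

lemma shift_unique:
  assumes c: "c \<in> blocks k i" and c': "c' \<in> blocks k i"
    and step: "instr_step l = 3" "instr_step l' = 3"
    and v: "v \<in> instr_verts k i c l" "v \<in> instr_verts k i c' l'"
  shows "c = c' \<and> l = l'"
proof -
  have eq: "grid_point c (fst (shift_source l)) (snd (shift_source l)) =
      grid_point c' (fst (shift_source l')) (snd (shift_source l'))"
    using v by (simp add: instr_verts_step3[OF step(1)] instr_verts_step3[OF step(2)])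
  have "\<bar>fst (shift_source l) - fst (shift_source l')\<bar> < 2"
    "\<bar>snd (shift_source l) - snd (shift_source l')\<bar> < 2"
    using step by (cases l; cases l'; simp)+
  then have "c = c' \<and> shift_source l = shift_source l'"
    using grid_point_inj[OF c c' eq] by (simp add: prod_eq_iff)
  then show ?thesis
    using step by (cases l; cases l') auto
qed

lemma instr_verts_subset_if_active:
  assumes "active k i S c l"
  shows "instr_verts k i c l \<subseteq> S"
proof -
  have "instr_verts k i c l \<subseteq> S" if "active1 k i S c l"
  proof -
    have "instr_step l = 1" using that by (simp add: active1_def)
    then have "instr_verts k i c l \<subseteq> Dcell_verts k i c"
      by (auto simp: instr_verts_step1 Dcell_verts_def)
    then show ?thesis using that by (auto simp: active1_def split: if_splits)
  qed
  then show ?thesis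
    using assms after1_subset[of S] after2_subset[of S]
    by (auto simp: active_def active2_def active3_def)
qed

lemma instr_step_eq_if_active:
  assumes c: "c \<in> blocks k i" and act: "active k i S c l" and v: "v \<in> instr_verts k i c l"
  shows "instr_step l = (if v \<notin> after1 k i S then 1 else if v \<notin> after2 k i S then 2 else 3)"
  using act unfolding active_def
proof (elim disjE)
  assume "active1 k i S c l"
  then show ?thesis
    using not_in_after1_if_active1[OF c _ v] by (simp add: active1_def)
next
  assume "active2 k i S c l"
  then show ?thesis
    using not_in_after2_if_active2[OF c _ v] v by (auto simp: active2_def)
next
  assume "active3 k i S c l"
  then show ?thesis
    using v after2_subset by (auto simp: active3_def)
qed

lemma active_unique:
  assumes c: "c \<in> blocks k i" and c': "c' \<in> blocks k i"
    and act: "active k i S c l" "active k i S c' l'"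
    and v: "v \<in> instr_verts k i c l" "v \<in> instr_verts k i c' l'"
  shows "c = c' \<and> l = l'"
proof -
  have step: "instr_step l = instr_step l'"
    using instr_step_eq_if_active[OF c act(1) v(1)] instr_step_eq_if_active[OF c' act(2) v(2)]
    by simp
  have "instr_step l = 1 \<Longrightarrow> active1 k i S c l \<and> active1 k i S c' l'"
    "instr_step l = 2 \<Longrightarrow> active2 k i S c l \<and> active2 k i S c' l'"
    "instr_step l = 3 \<Longrightarrow> instr_step l' = 3"
    using act step by (auto simp: active_def active1_def active2_def active3_def)
  moreover have "instr_step l \<in> {1, 2, 3}"
    by (cases l) simp_all
  ultimately show ?thesis
    using active1_unique[OF c c' _ _ v] active2_unique[OF c c' _ _ v] shift_unique[OF c c' _ _ v]
    by auto
qed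

section \<open>Boundary of the output\<close>

lemma sublattice_eq_grid_point:
  assumes v: "v \<in> sublattice k i"
  obtains c a b where "c \<in> blocks k i" "a \<in> {0, 1}" "b \<in> {0, 1}" "v = grid_point c a b"
proof -
  obtain x y where xy: "v = (x, y)" by (cases v)
  have r: "0 \<le> x" "x < N" "0 \<le> y" "y < N" "h dvd x" "h dvd y"
    using v xy by (auto simp: sublattice_def torus_vertices_def hgt_def)
  obtain s t where st: "x = h * s" "y = h * t" using r by (auto elim!: dvdE)
  define a where "a = s mod 2"
  define b where "b = t mod 2"
  define c where "c = (x - a * h, (y + b * h) mod N)"
  have "s - s mod 2 = 2 * (s div 2)"
    by (simp add: minus_mod_eq_mult_div)
  then have "x - a * h = 2 * h * (s div 2)"
    unfolding st a_def by (metis mult.commute mult.left_commute right_diff_distrib)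
  moreover have "t + t mod 2 = 2 * ((t + 1) div 2)"
    by presburger
  then have "y + b * h = 2 * h * ((t + 1) div 2)"
    unfolding st b_def by (metis mult.commute mult.left_commute distrib_left)
  ultimately have d: "2 * h dvd x - a * h" "2 * h dvd (y + b * h) mod N"
    using two_h_dvd_N by (simp_all add: dvd_mod)
  have ab: "a \<in> {0, 1}" "b \<in> {0, 1}"
    unfolding a_def b_def by (auto simp: mod2_eq_if)
  have "0 \<le> s"
    using r(1) h_pos st by (simp add: zero_le_mult_iff)
  then have "a \<le> s"
    by (simp add: a_def zmod_le_nonneg_dividend)
  then have "a * h \<le> x"
    using h_pos st by (simp add: mult.commute)
  then have "c \<in> blocks k i"
    using d r ab h_pos by (auto simp: mem_blocks_iff c_def Nk_def)
  moreover have "grid_point c a b = v"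
    using r xy by (simp add: grid_point_def c_def vn_def mod_simps)
  ultimately show ?thesis using that ab by blast
qed

definition active_instrs_at :: "vert set \<Rightarrow> vert \<Rightarrow> (vert \<times> instr) set" where
  "active_instrs_at S v = {(c, l). c \<in> blocks k i \<and> active k i S c l \<and> v \<in> instr_verts k i c l}"

lemma active_instrs_at_nonempty:
  assumes S: "S \<subseteq> sublattice k i" and v: "v \<in> S" "v \<notin> blocks k i"
  shows "active_instrs_at S v \<noteq> {}"
proof
  assume none: "active_instrs_at S v = {}"
  then have survives: "v \<in> after2 k i S"
    using v(1) unfolding after2_def after1_def active_instrs_at_def active_def by blast
  obtain c a b where c: "c \<in> blocks k i" and ab: "a \<in> {0, 1}" "b \<in> {0, 1}"
    and v_eq: "v = grid_point c a b"
    using S v(1) sublattice_eq_grid_point by blast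
  have "(a, b) \<noteq> (0, 0)"
    using c v(2) v_eq grid_point_0_0[OF c] by auto
  then have "(a, b) \<in> shift_source ` {A_B, A_G, A_D}"
    using ab by auto
  then obtain l where "l \<in> {A_B, A_G, A_D}" and l_source: "shift_source l = (a, b)"
    by (metis imageE)
  then have "instr_step l = 3" by auto
  then have "instr_verts k i c l = {v}"
    using v_eq l_source by (simp add: instr_verts_step3)
  then have "(c, l) \<in> active_instrs_at S v"
    using c \<open>instr_step l = 3\<close> survives by (simp add: active_instrs_at_def active_def active3_def)
  then show False using none by simp
qed

lemma card_active_instrs_at:
  assumes S: "S \<subseteq> sublattice k i" and v: "v \<notin> blocks k i"
  shows "card (active_instrs_at S v) = (if v \<in> S then 1 else 0)"
proof (cases "v \<in> S")
  case True
  then obtain c l where p: "(c, l) \<in> active_instrs_at S v"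
    using active_instrs_at_nonempty[OF S _ v] by auto
  have "p = (c, l)" if "p \<in> active_instrs_at S v" for p
    using that p active_unique unfolding active_instrs_at_def by (cases p) blast
  then have "active_instrs_at S v = {(c, l)}"
    using p by blast
  then show ?thesis using True by simp
next
  case False
  then have "active_instrs_at S v = {}"
    by (force simp: active_instrs_at_def dest: instr_verts_subset_if_active)
  then show ?thesis using False by simp
qed

lemma odd_card_incident_torus_path:
  assumes g: "\<And>j j'. g j = g j' \<longleftrightarrow> N dvd j - j'"
  shows "odd (card {x \<in> {{g j, g (j + 1)} | j. 0 \<le> j \<and> j < h}. v \<in> x}) \<longleftrightarrow> v = g 0 \<or> v = g h"
proof -
  have "g 0 \<noteq> g h"
    using g[of 0 h] h_pos two_h_le_N zdvd_not_zless by auto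
  then show ?thesis
    using odd_card_incident_path[of g N h v] g h_pos two_h_le_N by auto
qed

lemma odd_card_incident_hpath:
  "odd (card {x \<in> hpath k p h. v \<in> x}) \<longleftrightarrow> v = vn k p \<or> v = vn k (vplus p h 0)"
  using odd_card_incident_torus_path[of "\<lambda>j. vn k (vplus p j 0)" v]
  by (simp add: hpath_def vn_def vplus_def mod_eq_dvd_iff)

lemma odd_card_incident_vpath:
  "odd (card {x \<in> vpath k p h. v \<in> x}) \<longleftrightarrow> v = vn k p \<or> v = vn k (vplus p 0 h)"
  using odd_card_incident_torus_path[of "\<lambda>j. vn k (vplus p 0 j)" v]
  by (simp add: vpath_def vn_def vplus_def mod_eq_dvd_iff)

lemma odd_card_incident_cell_side:
  "odd (card {x \<in> cell_side k h a s. v \<in> x}) \<longleftrightarrow> v \<in> cell_vertex k h a ` side_corners s"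
  by (cases s) (auto simp: odd_card_incident_hpath odd_card_incident_vpath vplus_def)

text \<open>The sides flipped to shift a vertex to \<open>\<alpha>\<close> in step 3 also have \<open>\<alpha>\<close> in their boundary;
  there \<open>\<alpha>\<close> is the block corner \<open>c\<close>, a vertex of \<open>V\<^bsub>i-1\<^esub>\<close>.\<close>

lemma odd_incident_instr_flips:
  assumes c: "c \<in> blocks k i" and v: "v \<noteq> c"
  shows "odd (\<Sum>j<length (instr_flips k i c l). card {x \<in> instr_flips k i c l ! j. v \<in> x})
    \<longleftrightarrow> v \<in> instr_verts k i c l"
proof -
  define a where "a = cell_alpha h c (instr_cell l)"
  have "(\<Sum>j<length (instr_flips k i c l). card {x \<in> instr_flips k i c l ! j. v \<in> x})
      = (\<Sum>s\<leftarrow>instr_sides l. card {x \<in> cell_side k h a s. v \<in> x})"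
    by (simp add: instr_flips_def a_def sum_list_sum_nth atLeast0LessThan)
  moreover have "instr_verts k i c l = cell_vertex k h a ` instr_corners l"
    by (simp add: instr_verts_def a_def)
  moreover have "instr_cell l = CellA \<Longrightarrow> cell_vertex k h a Alpha = c"
    using vn_block[OF c] by (simp add: a_def)
  ultimately show ?thesis
    using odd_card_incident_cell_side[of a Top v] odd_card_incident_cell_side[of a Bot v]
      odd_card_incident_cell_side[of a Lft v] odd_card_incident_cell_side[of a Rgt v]
      cell_vertex_inj[of a] v
    by (cases l) (auto simp del: cell_vertex.simps cell_side.simps)
qed

lemma active_instrs_at_eq_odd_flips:
  assumes v: "v \<notin> blocks k i"
  shows "active_instrs_at S v = {(c, l). c \<in> blocks k i \<and> active k i S c l \<and>
    odd (\<Sum>j<length (instr_flips k i c l). card {x \<in> instr_flips k i c l ! j. v \<in> x})}"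
proof (rule set_eqI)
  fix p :: "vert \<times> instr"
  obtain c l where p: "p = (c, l)" by (cases p)
  show "p \<in> active_instrs_at S v \<longleftrightarrow> p \<in> {(c, l). c \<in> blocks k i \<and> active k i S c l \<and>
    odd (\<Sum>j<length (instr_flips k i c l). card {x \<in> instr_flips k i c l ! j. v \<in> x})}"
  proof (cases "c \<in> blocks k i")
    case True
    then have "v \<noteq> c" using v by auto
    then show ?thesis
      using odd_incident_instr_flips[OF True \<open>v \<noteq> c\<close>, of l] by (simp add: p active_instrs_at_def)
  qed (simp add: p active_instrs_at_def)
qed

lemma sigma_reduction_output:
  assumes v: "v \<in> torus_vertices k" "v \<notin> blocks k i"
  shows "v \<in> sigma k (reduction_output k i S) \<longleftrightarrow> odd (card (active_instrs_at S v))"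
proof -
  define A where "A = {(c, l). c \<in> blocks k i \<and> active k i S c l}"
  define n where "n p = length (instr_flips k i (fst p) (snd p))" for p
  define F where "F = (\<lambda>(c, l, j). instr_flips k i c l ! j)"
  define T where "T = {(c, l, j). (c, l) \<in> A \<and> j < n (c, l)}"
  define r where "r = (\<lambda>(p :: vert \<times> instr, j :: nat). (fst p, snd p, j))"
  have A_finite: "finite A"
    by (rule finite_subset[of _ "blocks k i \<times> UNIV"])
      (auto simp: A_def finite_blocks finite_UNIV_instr)
  have T_eq: "T = r ` (SIGMA p:A. {..<n p})"
    by (force simp: T_def r_def image_iff)
  have r_inj: "inj_on r (SIGMA p:A. {..<n p})"
    by (auto simp: inj_on_def r_def)
  have F_finite: "finite (F t)" if "t \<in> T" for t
    using that by (auto simp: T_def F_def n_def instr_flips_def finite_cell_side)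
  have "{(c, l, j). c \<in> blocks k i \<and> active k i S c l \<and> j < length (instr_flips k i c l) \<and>
      e \<in> instr_flips k i c l ! j} = {t \<in> T. e \<in> F t}" for e
    by (auto simp: T_def A_def F_def n_def)
  then have "reduction_output k i S = {e. odd (card {t \<in> T. e \<in> F t})}"
    unfolding reduction_output_def by simp
  then have "v \<in> sigma k (reduction_output k i S) \<longleftrightarrow> odd (\<Sum>t\<in>T. card {x \<in> F t. v \<in> x})"
    using odd_card_incident_mod2_sum[of T F v] A_finite F_finite v(1)
    by (simp add: sigma_def T_eq)
  also have "(\<Sum>t\<in>T. card {x \<in> F t. v \<in> x}) = (\<Sum>p\<in>A. \<Sum>j<n p. card {x \<in> F (r (p, j)). v \<in> x})"
    using A_finite by (simp add: T_eq sum.reindex[OF r_inj] sum.Sigma)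
  also have "odd \<dots> \<longleftrightarrow> odd (card {p \<in> A. odd (\<Sum>j<n p. card {x \<in> F (r (p, j)). v \<in> x})})"
    using A_finite by (simp add: even_sum_iff)
  also have "{p \<in> A. odd (\<Sum>j<n p. card {x \<in> F (r (p, j)). v \<in> x})} = active_instrs_at S v"
    unfolding active_instrs_at_eq_odd_flips[OF v(2)]
    by (simp add: A_def F_def r_def n_def split_def conj_assoc)
  finally show ?thesis .
qed

end

theorem proposition1:
  fixes k i :: nat and S :: "vert set"
  assumes "1 \<le> i" and "i \<le> k" and "S \<subseteq> sublattice k i"
  shows "(\<forall>c \<in> blocks k i. \<forall>c' \<in> blocks k i. \<forall>l l' v.
            active k i S c l \<and> active k i S c' l' \<and> instr_step l = instr_step l' \<and>
            v \<in> instr_verts k i c l \<and> v \<in> instr_verts k i c' l'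
            \<longrightarrow> c = c' \<and> l = l')
       \<and> (S - sigma k (reduction_output k i S)) \<union> (sigma k (reduction_output k i S) - S)
            \<subseteq> sublattice k (i - 1)"
proof -
  interpret reduction_level k i
    using assms(1,2) by unfold_locales
  have boundary: "v \<in> sigma k (reduction_output k i S) \<longleftrightarrow> v \<in> S"
    if "v \<in> torus_vertices k" "v \<notin> blocks k i" for v
    using sigma_reduction_output[OF that] card_active_instrs_at[OF assms(3) that(2)] by simp
  have "S \<subseteq> torus_vertices k" "sigma k (reduction_output k i S) \<subseteq> torus_vertices k"
    using assms(3) by (auto simp: sublattice_def sigma_def)
  then show ?thesis
    using active_unique boundary unfolding blocks_def by blast
qed

end
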